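(* Let $G_1$ and $G_2$ be directed graphs without self-loops on the common vertex set $[n]$ that are distribution equivalent, i.e. $\mathcal{P}(G_1)=\mathcal{P}(G_2)$. Then the condensation graphs of $G_1$ and $G_2$ are identical.
   Context: For a directed graph $G$ on $[n]$ without self-loops, let $B_G\in\{0,1\}^{n\times n}$ be its adjacency matrix with $[B_G]_{ij}=1$ iff there is an edge $j\to i$. A linear structural causal model consistent with $G$ is $\mathbf{x}=W\mathbf{x}+\mathbf{e}$ where $W\in\mathbb{R}^{n\times n}$ has $\{(i,j):W_{ij}\neq 0\}=\{(i,j):[B_G]_{ij}=1\}$, $I-W$ is invertible, and the noise vector $\mathbf{e}$ has jointly independent components of which at most one is Gaussian. The distribution set $\mathcal{P}(G)$ is the set of all distributions of $\mathbf{x}=(I-W)^{-1}\mathbf{e}$ arising from all such $W$ and noise distributions. Strongly connected components (SCCs) are the equivalence classes of the relation "there are directed paths $u\to v$ and $v\to u$". The condensation graph of $G$ is the directed graph whose vertices are the SCCs of $G$, with an edge from SCC $S$ to SCC $S'\neq S$ iff $G$ has an edge from some vertex of $S$ to some vertex of $S'$. *)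

theory Defs
  imports "HOL-Probability.Probability"
begin

text \<open>Vertices of a graph on [n] are the elements of a finite type 'n with CARD('n) = n.
  A directed graph is a set of edges; (u,v) \<in> G means u \<rightarrow> v.
  Hence [B_G]_ij = 1 iff (j,i) \<in> G.\<close>

definition no_self_loops :: "('n \<times> 'n) set \<Rightarrow> bool" where
  "no_self_loops G \<longleftrightarrow> (\<forall>v. (v, v) \<notin> G)"

definition is_gaussian :: "real measure \<Rightarrow> bool" where
  "is_gaussian M \<longleftrightarrow> (\<exists>\<mu> \<sigma>. \<sigma> > 0 \<and> M = density lborel (normal_density \<mu> \<sigma>))"

text \<open>The distribution set P(G): distributions of x = (I - W)^{-1} e, where W has support
  exactly B_G, I - W is invertible, and e has jointly independent components (its law is the
  product of its marginals M i), at most one of which is Gaussian.\<close>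
definition sem_dists :: "('n::finite \<times> 'n) set \<Rightarrow> (real^'n) measure set" where
  "sem_dists G =
     {distr (PiM UNIV M) borel (\<lambda>f. matrix_inv (mat 1 - W) *v (\<chi> i. f i)) | W M.
        (\<forall>i j. W $ i $ j \<noteq> 0 \<longleftrightarrow> (j, i) \<in> G) \<and>
        invertible (mat 1 - W) \<and>
        (\<forall>i. prob_space (M i) \<and> sets (M i) = sets (borel :: real measure)) \<and>
        card {i. is_gaussian (M i)} \<le> 1}"

definition scc :: "('n \<times> 'n) set \<Rightarrow> 'n \<Rightarrow> 'n set" where
  "scc G v = {u. (v, u) \<in> G\<^sup>* \<and> (u, v) \<in> G\<^sup>*}"

definition sccs :: "('n \<times> 'n) set \<Rightarrow> 'n set set" where
  "sccs G = range (scc G)"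

definition condensation :: "('n \<times> 'n) set \<Rightarrow> 'n set set \<times> ('n set \<times> 'n set) set" where
  "condensation G = (sccs G,
     {(S, S'). S \<in> sccs G \<and> S' \<in> sccs G \<and> S \<noteq> S' \<and> (\<exists>u\<in>S. \<exists>v\<in>S'. (u, v) \<in> G)})"

end

theory Submission
  imports Defs
begin

text \<open>Fix weights \<open>W\<^sub>1\<close> with support \<open>G\<^sub>1\<close> and drive the model with independent fair-coin
  noise. The resulting distribution lies in \<open>P(G\<^sub>1)\<close>, and its atoms are exactly the points \<open>x\<close>
  with \<open>(I - W\<^sub>1) x \<in> {0,1}\<^sup>n\<close>. If it is also realised by \<open>W\<^sub>2\<close> and noise with atom sets
  \<open>T\<^sub>i\<close>, then \<open>N = (I - W\<^sub>2)(I - W\<^sub>1)\<^sup>-\<^sup>1\<close> maps the cube \<open>{0,1}\<^sup>n\<close> onto the box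
  \<open>T\<^sub>1 \<times> \<dots> \<times> T\<^sub>n\<close>, which forces every column of \<open>N\<close> to have a single nonzero entry:
  \<open>N\<close> is a permutation \<open>\<rho>\<close> times a diagonal matrix. Comparing the nonzero diagonals in
  \<open>I - W\<^sub>2 = N (I - W\<^sub>1)\<close> shows \<open>\<rho> k = k\<close> or \<open>\<rho> k \<rightarrow> k\<close> in \<open>G\<^sub>1\<close>, so the cycles of \<open>\<rho>\<close> stay
  inside \<open>G\<^sub>1\<close>-SCCs, and every edge \<open>u \<rightarrow> v\<close> of \<open>G\<^sub>2\<close> is matched by \<open>u = k\<close> or \<open>u \<rightarrow> k\<close> in
  \<open>G\<^sub>1\<close> with \<open>k\<close> in the \<open>G\<^sub>1\<close>-SCC of \<open>v\<close>. Used in both directions, this gives equal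
  reachability, hence equal SCCs, and the same edges between distinct SCCs.\<close>

lemma
  fixes A :: "'a::semiring_1^'n^'m"
  assumes "invertible A"
  shows matrix_inv_left: "matrix_inv A ** A = mat 1"
    and matrix_inv_right: "A ** matrix_inv A = mat 1"
  using assms someI_ex[of "\<lambda>A'. A ** A' = mat 1 \<and> A' ** A = mat 1"]
  unfolding invertible_def matrix_inv_def by auto

lemma invertible_matrix_inv:
  fixes A :: "'a::semiring_1^'n^'m"
  assumes "invertible A"
  shows "invertible (matrix_inv A)"
  using matrix_inv_left[OF assms] matrix_inv_right[OF assms] unfolding invertible_def by blast

lemma
  fixes A :: "'a::comm_semiring_1^'n::finite^'m::finite"
  assumes "invertible A"
  shows matrix_inv_cancel_left: "matrix_inv A *v (A *v x) = x"
    and matrix_inv_cancel_right: "A *v (matrix_inv A *v y) = y"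
  by (simp_all add: matrix_vector_mul_assoc matrix_inv_left[OF assms] matrix_inv_right[OF assms])

lemma invertible_mat_1_minus_if_row_sums_less_1:
  fixes W :: "real^'n::finite^'n"
  assumes row_sum: "\<And>i. (\<Sum>j\<in>UNIV. \<bar>W$i$j\<bar>) < 1"
  shows "invertible (mat 1 - W)"
proof -
  have "x = 0" if "(mat 1 - W) *v x = 0" for x :: "real^'n"
  proof -
    have fixed: "W *v x = x" using that by (simp add: matrix_vector_mult_diff_rdistrib)
    obtain i where max: "\<And>j. \<bar>x$j\<bar> \<le> \<bar>x$i\<bar>"
      using Max_in[of "range (\<lambda>j. \<bar>x$j\<bar>)"] Max_ge[of "range (\<lambda>j. \<bar>x$j\<bar>)"] by fastforce
    have "\<bar>x$i\<bar> \<le> (\<Sum>j\<in>UNIV. \<bar>W$i$j\<bar> * \<bar>x$j\<bar>)"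
      using arg_cong[OF fixed, of "\<lambda>y. \<bar>y$i\<bar>"] sum_abs[of "\<lambda>j. W$i$j * x$j" UNIV]
      by (simp add: matrix_vector_mult_def abs_mult)
    also have "\<dots> \<le> (\<Sum>j\<in>UNIV. \<bar>W$i$j\<bar>) * \<bar>x$i\<bar>"
      unfolding sum_distrib_right by (intro sum_mono mult_left_mono max) auto
    finally have "\<bar>x$i\<bar> = 0"
      using row_sum[of i] by (auto simp: mult_le_cancel_right1)
    then show "x = 0" using max by (simp add: vec_eq_iff)
  qed
  then show ?thesis
    by (simp add: invertible_left_inverse matrix_left_invertible_ker)
qed

lemma ex_weight_matrix_with_support:
  fixes G :: "('n::finite \<times> 'n) set"
  obtains W :: "real^'n^'n" where "\<And>i j. W$i$j \<noteq> 0 \<longleftrightarrow> (j, i) \<in> G" and "invertible (mat 1 - W)"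
proof
  define e :: real where "e = 1 / (2 * CARD('n))"
  define W :: "real^'n^'n" where "W = (\<chi> i j. if (j, i) \<in> G then e else 0)"
  have "0 < e" by (simp add: e_def)
  then show "W$i$j \<noteq> 0 \<longleftrightarrow> (j, i) \<in> G" for i j by (simp add: W_def)
  have "(\<Sum>j\<in>UNIV. \<bar>W$i$j\<bar>) \<le> (\<Sum>j\<in>(UNIV::'n set). e)" for i
    using \<open>0 < e\<close> by (intro sum_mono) (simp add: W_def)
  also have "\<dots> < 1" by (simp add: e_def)
  finally show "invertible (mat 1 - W)"
    by (rule invertible_mat_1_minus_if_row_sums_less_1)
qed

section \<open>Matrices mapping the cube onto a box\<close>

lemma matrix_vector_mult_axis_nth:
  fixes N :: "'a::semiring_1^'n::finite^'m"
  shows "(N *v axis k 1) $ i = N $ i $ k"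
  by (simp add: matrix_vector_mult_def axis_def if_distrib cong: if_cong)

lemma zero_one_add_eq_axis_imp_zero:
  fixes p q :: "real^'n"
  assumes "\<forall>i. p$i \<in> {0,1}" "\<forall>i. q$i \<in> {0,1}" "p + q = axis k 1"
  shows "p = 0 \<or> q = 0"
proof -
  have pq: "p$i + q$i = (if i = k then 1 else 0)" for i
    using arg_cong[OF assms(3), of "\<lambda>x. x$i"] by (simp add: axis_def)
  show ?thesis
  proof (cases "p$k = 0")
    case True
    then have "p$i = 0" for i
      using pq[of i] assms(1,2)[rule_format, of i] by (cases "i = k") auto
    then show ?thesis by (simp add: vec_eq_iff)
  next
    case False
    then have "q$i = 0" for i
      using pq[of i] pq[of k] assms(1,2)[rule_format, of i] assms(1)[rule_format, of k]
      by (cases "i = k") auto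
    then show ?thesis by (simp add: vec_eq_iff)
  qed
qed

text \<open>Split the column \<open>N e\<^sub>k\<close>, a point of the box, into its \<open>i\<close>-th entry and the rest. Both
  parts stay in the box, so their preimages are 0/1 vectors summing to \<open>e\<^sub>k\<close>, and one part
  must vanish.\<close>

lemma cube_to_box_column_unique:
  fixes N :: "real^'n::finite^'n"
  assumes "invertible N"
    and cube_box: "\<And>y. (\<forall>i. y$i \<in> {0,1}) \<longleftrightarrow> (\<forall>i. (N *v y)$i \<in> T i)"
  shows "\<exists>\<^sub>\<le>\<^sub>1 i. N$i$k \<noteq> 0"
proof (rule Uniq_I, rule ccontr)
  fix i j
  assume nonzero: "N$i$k \<noteq> 0" "N$j$k \<noteq> 0" and "j \<noteq> i"
  define z where "z = N *v axis k 1"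
  define v where "v = (\<chi> l. if l = i then z$l else 0)"
  define w where "w = z - v"
  have "z$l \<in> T l" for l
    using cube_box[of "axis k 1"] by (auto simp: z_def axis_def)
  moreover have "0 \<in> T l" for l
    using cube_box[of 0] by simp
  ultimately have box: "\<forall>l. v$l \<in> T l" "\<forall>l. w$l \<in> T l"
    by (auto simp: v_def w_def)
  define p where "p = matrix_inv N *v v"
  define q where "q = matrix_inv N *v w"
  have "\<forall>l. p$l \<in> {0,1}" "\<forall>l. q$l \<in> {0,1}"
    using box cube_box by (simp_all add: p_def q_def matrix_inv_cancel_right[OF assms(1)])
  moreover have "p + q = axis k 1"
    by (simp add: p_def q_def w_def z_def matrix_vector_right_distrib[symmetric]
        matrix_inv_cancel_left[OF assms(1)])
  ultimately have "p = 0 \<or> q = 0"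
    by (rule zero_one_add_eq_axis_imp_zero)
  moreover have "v = N *v p" "w = N *v q"
    by (simp_all add: p_def q_def matrix_inv_cancel_right[OF assms(1)])
  ultimately have "v$i = 0 \<or> w$j = 0"
    by auto
  moreover have "v$i = N$i$k" "w$j = N$j$k"
    using \<open>j \<noteq> i\<close> by (simp_all add: v_def w_def z_def matrix_vector_mult_axis_nth)
  ultimately show False
    using nonzero by auto
qed

lemma invertible_column_unique_imp_permutation:
  fixes N :: "'a::field^'n::finite^'n"
  assumes "invertible N" and column_unique: "\<And>k. \<exists>\<^sub>\<le>\<^sub>1 i. N$i$k \<noteq> 0"
  obtains \<rho> where "inj \<rho>" and "\<And>i k. N$i$k \<noteq> 0 \<longleftrightarrow> i = \<rho> k"
proof
  have column_nonzero: "\<exists>i. N$i$k \<noteq> 0" for k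
  proof (rule ccontr)
    assume "\<nexists>i. N$i$k \<noteq> 0"
    then have "N *v axis k 1 = N *v 0"
      by (simp add: vec_eq_iff matrix_vector_mult_axis_nth)
    then have "axis k (1::'a) = 0"
      by (rule injD[OF inj_matrix_vector_mult[OF assms(1)]])
    then show False
      by simp
  qed
  have row_nonzero: "\<exists>k. N$i$k \<noteq> 0" for i
  proof (rule ccontr)
    assume "\<nexists>k. N$i$k \<noteq> 0"
    then have "(N *v (matrix_inv N *v axis i 1)) $ i = 0"
      by (simp add: matrix_vector_mult_def)
    then show False
      by (simp add: matrix_inv_cancel_right[OF assms(1)])
  qed
  define \<rho> where "\<rho> k = (THE i. N$i$k \<noteq> 0)" for k
  have unique: "\<exists>!i. N$i$k \<noteq> 0" for k
    using column_nonzero column_unique by (simp add: ex1_iff_ex_Uniq)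
  show \<rho>: "N$i$k \<noteq> 0 \<longleftrightarrow> i = \<rho> k" for i k
    using the1_equality[OF unique] theI'[OF unique] unfolding \<rho>_def by blast
  show "inj \<rho>"
    using row_nonzero \<rho> by (intro finite_UNIV_surj_inj) (auto simp: surj_def)
qed

lemma matrix_mult_nonzero_through_permutation:
  fixes N B :: "'a::field^'n::finite^'n"
  assumes "\<And>i k. N$i$k \<noteq> 0 \<longleftrightarrow> i = \<rho> k" and "(N ** B)$v$u \<noteq> 0"
  shows "\<exists>k. \<rho> k = v \<and> B$k$u \<noteq> 0"
proof -
  have "(\<Sum>k\<in>UNIV. N$v$k * B$k$u) \<noteq> 0"
    using assms(2) by (simp add: matrix_matrix_mult_def)
  then obtain k where "N$v$k * B$k$u \<noteq> 0"
    by (meson sum.not_neutral_contains_not_neutral)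
  then show ?thesis
    using assms(1) by auto
qed

lemma cube_to_box_factor_through_permutation:
  fixes B1 B2 :: "real^'n::finite^'n"
  assumes B1: "invertible B1" and B2: "invertible B2"
    and cube_box: "\<And>x. (\<forall>i. (B1 *v x)$i \<in> {0,1}) \<longleftrightarrow> (\<forall>i. (B2 *v x)$i \<in> T i)"
  obtains \<rho> where "inj \<rho>" and "\<And>v u. B2$v$u \<noteq> 0 \<Longrightarrow> \<exists>k. \<rho> k = v \<and> B1$k$u \<noteq> 0"
proof -
  define N where "N = B2 ** matrix_inv B1"
  have N: "invertible N"
    unfolding N_def using B1 B2 by (simp add: invertible_mult invertible_matrix_inv)
  have N_cube_box: "(\<forall>i. y$i \<in> {0,1}) \<longleftrightarrow> (\<forall>i. (N *v y)$i \<in> T i)" for y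
    using cube_box[of "matrix_inv B1 *v y"] B1
    by (simp add: N_def matrix_vector_mul_assoc[symmetric] matrix_inv_cancel_right)
  obtain \<rho> where "inj \<rho>" and \<rho>: "\<And>i k. N$i$k \<noteq> 0 \<longleftrightarrow> i = \<rho> k"
    by (rule invertible_column_unique_imp_permutation[OF N cube_to_box_column_unique[OF N N_cube_box]])
      (rule that)
  have "B2 = N ** B1"
    using B1 by (simp add: N_def matrix_mul_assoc[symmetric] matrix_inv_left)
  then have "B2$v$u \<noteq> 0 \<Longrightarrow> \<exists>k. \<rho> k = v \<and> B1$k$u \<noteq> 0" for v u
    using matrix_mult_nonzero_through_permutation[OF \<rho>] by simp
  then show ?thesis
    using that \<open>inj \<rho>\<close> by blast
qed

section \<open>Atoms of linear structural equation models\<close>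

lemma emeasure_gaussian_singleton:
  assumes "is_gaussian M"
  shows "emeasure M {x} = 0"
proof -
  obtain \<mu> \<sigma> where "M = density lborel (normal_density \<mu> \<sigma>)"
    using assms unfolding is_gaussian_def by auto
  then show ?thesis by (simp add: emeasure_density nn_integral_null_set)
qed

definition fair_coin :: "real measure" where
  "fair_coin = distr (measure_pmf (pmf_of_set {0, 1})) borel id"

lemma prob_space_fair_coin: "prob_space fair_coin"
  unfolding fair_coin_def by (rule prob_space.prob_space_distr) (auto simp: prob_space_measure_pmf)

lemma sets_fair_coin: "sets fair_coin = sets borel"
  unfolding fair_coin_def by simp

lemma emeasure_fair_coin_singleton_nonzero: "emeasure fair_coin {r} \<noteq> 0 \<longleftrightarrow> r \<in> {0, 1}"
  unfolding fair_coin_def by (simp add: emeasure_distr emeasure_pmf_single indicator_def)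

lemma not_gaussian_fair_coin: "\<not> is_gaussian fair_coin"
  using emeasure_gaussian_singleton emeasure_fair_coin_singleton_nonzero[of 0] by force

lemma measurable_matrix_vector_mult_PiM:
  fixes A :: "real^'n::finite^'m::finite"
  assumes "\<And>i. sets (M i) = sets borel"
  shows "(\<lambda>f. A *v (\<chi> i. f i)) \<in> borel_measurable (PiM UNIV M)"
proof (subst borel_measurable_euclidean_space, intro ballI)
  fix b :: "real^'m" assume "b \<in> Basis"
  then obtain i where b: "b = axis i 1" by (auto simp: Basis_vec_def)
  have "(\<lambda>f. f j) \<in> borel_measurable (PiM UNIV M)" for j
    using measurable_component_singleton[of j UNIV M] measurable_cong_sets[OF refl assms] by blast
  then have "(\<lambda>f. \<Sum>j\<in>UNIV. A$i$j * f j) \<in> borel_measurable (PiM UNIV M)"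
    by (intro borel_measurable_sum borel_measurable_times) auto
  then show "(\<lambda>f. (A *v (\<chi> i. f i)) \<bullet> b) \<in> borel_measurable (PiM UNIV M)"
    by (simp add: b inner_axis matrix_vector_mult_def)
qed

lemma emeasure_distr_matrix_inv_singleton:
  fixes B :: "real^'n::finite^'n"
  assumes "invertible B"
    and "\<And>i. sigma_finite_measure (M i)" and sets_M: "\<And>i. sets (M i) = sets borel"
  shows "emeasure (distr (PiM UNIV M) borel (\<lambda>f. matrix_inv B *v (\<chi> i. f i))) {x}
    = (\<Prod>i\<in>UNIV. emeasure (M i) {(B *v x) $ i})"
proof -
  interpret product_sigma_finite M
    unfolding product_sigma_finite_def using assms(2) by blast
  have "space (M i) = UNIV" for i
    using sets_eq_imp_space_eq[OF sets_M] by simp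
  moreover have "matrix_inv B *v (\<chi> i. f i) = x \<longleftrightarrow> (\<forall>i. f i = (B *v x) $ i)" for f
    using matrix_inv_cancel_left[OF assms(1)] matrix_inv_cancel_right[OF assms(1)]
    by (metis vec_eq_iff vec_lambda_beta)
  ultimately have "(\<lambda>f. matrix_inv B *v (\<chi> i. f i)) -` {x} \<inter> space (PiM UNIV M)
      = PiE UNIV (\<lambda>i. {(B *v x) $ i})"
    by (auto simp: space_PiM PiE_def Pi_def extensional_def)
  then show ?thesis
    using sets_M
    by (simp add: emeasure_distr measurable_matrix_vector_mult_PiM emeasure_PiM)
qed

section \<open>Strongly connected components\<close>

lemma scc_eq_if_mem:
  assumes "u \<in> scc G v"
  shows "scc G u = scc G v"
  using assms unfolding scc_def by (blast intro: rtrancl_trans)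

lemma mem_scc_of_inj_step:
  fixes \<rho> :: "'n::finite \<Rightarrow> 'n"
  assumes "inj \<rho>" and step: "\<And>k. (\<rho> k, k) \<in> G\<^sup>="
  shows "k \<in> scc G (\<rho> k)"
proof -
  have "(\<rho> y, y) \<in> G\<^sup>*" for y
    using step[of y] by auto
  then have backwards: "((\<rho> ^^ m) x, x) \<in> G\<^sup>*" for m x
    by (induction m) (auto intro: rtrancl_trans)
  obtain n where "0 < n" "(\<rho> ^^ n) k = k"
    using funpow_inj_finite[OF assms(1)] by auto
  then obtain m where "(\<rho> ^^ Suc m) k = k"
    using gr0_conv_Suc by auto
  then have "(k, \<rho> k) \<in> G\<^sup>*"
    using backwards[of m "\<rho> k"] by (simp only: funpow_Suc_right comp_apply)
  then show ?thesis
    using backwards[of 1 k] by (simp add: scc_def)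
qed

lemma rtrancl_subset_if_edges_into_scc:
  assumes "\<And>u v. (u, v) \<in> G2 \<Longrightarrow> \<exists>k\<in>scc G1 v. (u, k) \<in> G1\<^sup>="
  shows "G2\<^sup>* \<subseteq> G1\<^sup>*"
proof (rule rtrancl_subset_rtrancl, rule subrelI)
  fix u v assume "(u, v) \<in> G2"
  then obtain k where "(k, v) \<in> G1\<^sup>*" "(u, k) \<in> G1\<^sup>="
    using assms unfolding scc_def by blast
  then show "(u, v) \<in> G1\<^sup>*"
    by (auto intro: rtrancl_trans)
qed

lemma condensation_edge_if_edges_into_scc:
  assumes scc_eq: "scc G1 = scc G2"
    and into: "\<And>u v. (u, v) \<in> G1 \<Longrightarrow> \<exists>k\<in>scc G2 v. (u, k) \<in> G2\<^sup>="
    and "(S, S') \<in> snd (condensation G1)"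
  shows "(S, S') \<in> snd (condensation G2)"
proof -
  obtain u v where S: "S \<in> sccs G1" "S' \<in> sccs G1" "S \<noteq> S'" "u \<in> S" "v \<in> S'" "(u, v) \<in> G1"
    using assms(3) unfolding condensation_def by auto
  have scc_of_mem: "T = scc G2 w" if T: "T \<in> sccs G1" and w: "w \<in> T" for T w
  proof -
    obtain a where "T = scc G2 a"
      using T unfolding sccs_def scc_eq by blast
    then show ?thesis
      using w scc_eq_if_mem by metis
  qed
  have "S = scc G2 u" "S' = scc G2 v"
    using S scc_of_mem by auto
  obtain k where k: "k \<in> S'" "(u, k) \<in> G2\<^sup>="
    using into[OF S(6)] \<open>S' = scc G2 v\<close> by blast
  have "k \<noteq> u"
    using k(1) S(3) \<open>S = scc G2 u\<close> \<open>S' = scc G2 v\<close> scc_eq_if_mem by metis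
  moreover have "S \<in> sccs G2" "S' \<in> sccs G2"
    using S(1,2) by (simp_all add: sccs_def scc_eq)
  ultimately show ?thesis
    using S(3,4) k unfolding condensation_def by auto
qed

lemma condensation_eq_if_edges_into_scc:
  assumes "\<And>u v. (u, v) \<in> G2 \<Longrightarrow> \<exists>k\<in>scc G1 v. (u, k) \<in> G1\<^sup>="
    and "\<And>u v. (u, v) \<in> G1 \<Longrightarrow> \<exists>k\<in>scc G2 v. (u, k) \<in> G2\<^sup>="
  shows "condensation G1 = condensation G2"
proof -
  have "G1\<^sup>* = G2\<^sup>*"
    using rtrancl_subset_if_edges_into_scc[OF assms(1)] rtrancl_subset_if_edges_into_scc[OF assms(2)]
    by blast
  then have scc_eq: "scc G1 = scc G2"
    by (simp add: scc_def [abs_def])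
  have "snd (condensation G1) = snd (condensation G2)"
    using condensation_edge_if_edges_into_scc[OF scc_eq assms(2)]
      condensation_edge_if_edges_into_scc[OF scc_eq[symmetric] assms(1)]
    by auto
  then show ?thesis
    using scc_eq by (simp add: condensation_def sccs_def)
qed

lemma mat_1_minus_nonzero_iff:
  fixes W :: "real^'n::finite^'n"
  assumes "no_self_loops G" and "\<And>i j. W$i$j \<noteq> 0 \<longleftrightarrow> (j, i) \<in> G"
  shows "(mat 1 - W)$k$u \<noteq> 0 \<longleftrightarrow> (u, k) \<in> G\<^sup>="
proof -
  have "W$u$u = 0"
    using assms unfolding no_self_loops_def by blast
  then show ?thesis
    using assms(2) by (cases "k = u") (auto simp: mat_def)
qed

lemma sem_dists_subset_imp_cube_box:
  fixes G1 G2 :: "('n::finite \<times> 'n) set"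
  assumes "sem_dists G1 \<subseteq> sem_dists G2"
  obtains W1 W2 :: "real^'n^'n" and T where
    "\<forall>i j. W1$i$j \<noteq> 0 \<longleftrightarrow> (j, i) \<in> G1" and "invertible (mat 1 - W1)"
    and "\<forall>i j. W2$i$j \<noteq> 0 \<longleftrightarrow> (j, i) \<in> G2" and "invertible (mat 1 - W2)"
    and "\<And>x. (\<forall>i. ((mat 1 - W1) *v x)$i \<in> {0,1}) \<longleftrightarrow> (\<forall>i. ((mat 1 - W2) *v x)$i \<in> T i)"
proof -
  obtain W1 :: "real^'n^'n" where W1: "\<forall>i j. W1$i$j \<noteq> 0 \<longleftrightarrow> (j, i) \<in> G1" "invertible (mat 1 - W1)"
    by (metis ex_weight_matrix_with_support)
  define \<mu> where "\<mu> = distr (PiM UNIV (\<lambda>_. fair_coin)) borel (\<lambda>f. matrix_inv (mat 1 - W1) *v (\<chi> i. f i))"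
  have "\<mu> \<in> sem_dists G1"
    unfolding sem_dists_def \<mu>_def
    by (intro CollectI exI[of _ W1] exI[of _ "\<lambda>_. fair_coin"])
      (simp add: W1 prob_space_fair_coin sets_fair_coin not_gaussian_fair_coin)
  then have "\<mu> \<in> sem_dists G2"
    using assms by blast
  then obtain W2 :: "real^'n^'n" and M where
    \<mu>: "\<mu> = distr (PiM UNIV M) borel (\<lambda>f. matrix_inv (mat 1 - W2) *v (\<chi> i. f i))"
    and W2: "\<forall>i j. W2$i$j \<noteq> 0 \<longleftrightarrow> (j, i) \<in> G2" "invertible (mat 1 - W2)"
    and M: "\<forall>i. prob_space (M i) \<and> sets (M i) = sets borel"
    unfolding sem_dists_def by blast
  have cube: "(\<forall>i. ((mat 1 - W1) *v x)$i \<in> {0,1}) \<longleftrightarrow> emeasure \<mu> {x} \<noteq> 0" for x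
    unfolding \<mu>_def
    by (simp add: emeasure_distr_matrix_inv_singleton W1(2) prob_space_fair_coin sets_fair_coin
        prob_space_imp_sigma_finite emeasure_fair_coin_singleton_nonzero)
  have box: "emeasure \<mu> {x} \<noteq> 0 \<longleftrightarrow> (\<forall>i. ((mat 1 - W2) *v x)$i \<in> {r. emeasure (M i) {r} \<noteq> 0})" for x
    unfolding \<mu>
    by (simp add: emeasure_distr_matrix_inv_singleton W2(2) M prob_space_imp_sigma_finite)
  show ?thesis
    by (rule that[OF W1 W2]) (simp only: cube box)
qed

lemma sem_dists_subset_imp_edges_into_scc:
  fixes G1 G2 :: "('n::finite \<times> 'n) set"
  assumes "no_self_loops G1" and "no_self_loops G2" and "sem_dists G1 \<subseteq> sem_dists G2"
    and "(u, v) \<in> G2"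
  shows "\<exists>k\<in>scc G1 v. (u, k) \<in> G1\<^sup>="
proof -
  obtain W1 W2 :: "real^'n^'n" and T where
    W1: "\<forall>i j. W1$i$j \<noteq> 0 \<longleftrightarrow> (j, i) \<in> G1" "invertible (mat 1 - W1)"
    and W2: "\<forall>i j. W2$i$j \<noteq> 0 \<longleftrightarrow> (j, i) \<in> G2" "invertible (mat 1 - W2)"
    and cube_box: "\<And>x. (\<forall>i. ((mat 1 - W1) *v x)$i \<in> {0,1}) \<longleftrightarrow> (\<forall>i. ((mat 1 - W2) *v x)$i \<in> T i)"
    using sem_dists_subset_imp_cube_box[OF assms(3)] by blast
  define B1 where "B1 = mat 1 - W1"
  define B2 where "B2 = mat 1 - W2"
  have B1: "B1$k$u \<noteq> 0 \<longleftrightarrow> (u, k) \<in> G1\<^sup>=" for k u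
    unfolding B1_def by (rule mat_1_minus_nonzero_iff[OF assms(1) W1(1)[rule_format]])
  have B2: "B2$k$u \<noteq> 0 \<longleftrightarrow> (u, k) \<in> G2\<^sup>=" for k u
    unfolding B2_def by (rule mat_1_minus_nonzero_iff[OF assms(2) W2(1)[rule_format]])
  obtain \<rho> where "inj \<rho>" and through: "\<And>v u. B2$v$u \<noteq> 0 \<Longrightarrow> \<exists>k. \<rho> k = v \<and> B1$k$u \<noteq> 0"
    by (rule cube_to_box_factor_through_permutation[OF W1(2) W2(2) cube_box, folded B1_def B2_def])
      (rule that)
  have "(\<rho> k, k) \<in> G1\<^sup>=" for k
  proof -
    obtain k' where "\<rho> k' = \<rho> k" "B1$k'$(\<rho> k) \<noteq> 0"
      using through[of "\<rho> k" "\<rho> k"] B2[of "\<rho> k" "\<rho> k"] by auto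
    moreover have "k' = k"
      using \<open>inj \<rho>\<close> \<open>\<rho> k' = \<rho> k\<close> by (rule injD)
    ultimately show ?thesis
      using B1 by simp
  qed
  then have scc: "k \<in> scc G1 (\<rho> k)" for k
    by (rule mem_scc_of_inj_step[OF \<open>inj \<rho>\<close>])
  obtain k where "\<rho> k = v" "B1$k$u \<noteq> 0"
    using through[of v u] B2[of v u] assms(4) by auto
  then show ?thesis
    using scc[of k] B1[of k u] by auto
qed

theorem corollary1:
  fixes G1 G2 :: "('n::finite \<times> 'n) set"
  assumes "no_self_loops G1" and "no_self_loops G2"
    and "sem_dists G1 = sem_dists G2"
  shows "condensation G1 = condensation G2"
proof (rule condensation_eq_if_edges_into_scc)
  show "\<exists>k\<in>scc G1 v. (u, k) \<in> G1\<^sup>=" if "(u, v) \<in> G2" for u v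
    using sem_dists_subset_imp_edges_into_scc[of G1 G2] assms that by simp
  show "\<exists>k\<in>scc G2 v. (u, k) \<in> G2\<^sup>=" if "(u, v) \<in> G1" for u v
    using sem_dists_subset_imp_edges_into_scc[of G2 G1] assms that by simp
qed

end
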